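(* Consider the oceanic model with threshold $h$ under the Shapley scheme. Let $\Pi$ be a partition of all players into winning pools such that every atomic player $i$ is in a pool whose other members are non-atomic players of total mass $k_i$ with $0<k_i\le h$ and $a_i+k_i\ge h$, all remaining non-atomic players are in pools containing no atomic player, each of total mass exactly $l\ge h$ (at least one such pool), and for all distinct atomic players $i,j$: \[\frac{h-a_i}{k_i^2}=\frac{1}{l},\qquad \frac{k_i+a_i-h}{k_i}\ge\frac{a_i}{l},\qquad \frac{k_i+a_i-h}{k_i}\ge\frac{(h-a_j)^2-(\max(0,h-a_i-a_j))^2+(\max(0,a_i-h+k_j))^2}{2k_j^2}.\] Then the Shapley scheme is Sybil-proof with respect to $\Pi$: no atomic player can obtain a strictly larger total payoff by a Sybil strategy than her payoff under $\Pi$.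
   Context: Oceanic model: finitely many atomic players, player $i$ with stake $a_i>0$, and a continuum of non-atomic players (a measurable set of them contributes stake equal to its measure); threshold $h>0$ with $a_i<h$ for all atomic $i$. Pools partition all players; a pool $S$ has stake $m(S)$ (non-atomic mass plus atomic stakes) and reward $\rho(S)=1$ if $m(S)\ge h$ (winning), else $0$. Shapley scheme (oceanic): in a pool $S$ with non-atomic mass $k>0$ and atomic members with stakes $b_1,\dots,b_t$, let $L_1,\dots,L_t$ be i.i.d. uniform on $[0,k]$ and $P(i)=\{j\ne i: L_j<L_i\}$; atomic member $i$ receives $\Pr\big[\sum_{j\in P(i)}b_j+L_i<h\le\sum_{j\in P(i)}b_j+L_i+b_i\big]$; the remainder is shared equally per unit of stake among non-atomic members. Sybil strategy: given a partition $\Pi$, an atomic player $i$ with stake $a_i$ splits her stake into nonnegative amounts $s_{1},\dots,s_{t}$ with $\sum_j s_j=a_i$ and joins $t$ distinct pools among those of $\Pi$ (her own original pool being taken without her), contributing $s_j$ to the $j$-th of them as a separate atomic identity of stake $s_j$; all other players stay put. Her payoff is the sum of the payments her identities receive in these pools. A scheme is Sybil-proof with respect to $\Pi$ if no atomic player becomes strictly better off (relative to her payoff under $\Pi$) by switching to a Sybil strategy. *)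

theory Defs
  imports "HOL-Probability.Probability"
begin

text \<open>Shapley payment (oceanic model) to the atomic member with index i of a pool with
  non-atomic mass k > 0 and atomic stakes bs (indexed 0..length bs - 1):
  the probability, for L_1,...,L_t i.i.d. uniform on [0,k], that
  sum of bs_j over predecessors j of i plus L_i < h <= that plus bs_i.\<close>

definition arrival_space :: "real \<Rightarrow> nat \<Rightarrow> (nat \<Rightarrow> real) measure" where
  "arrival_space k t = PiM {..<t} (\<lambda>_. uniform_measure lborel {0..k})"

definition shapley_pay :: "real \<Rightarrow> real \<Rightarrow> real list \<Rightarrow> nat \<Rightarrow> real" where
  "shapley_pay h k bs i =
     measure (arrival_space k (length bs))
       {L \<in> space (arrival_space k (length bs)).
          (let pre = (\<Sum>j\<in>{j. j < length bs \<and> j \<noteq> i \<and> L j < L i}. bs ! j)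
           in pre + L i < h \<and> h \<le> pre + L i + bs ! i)}"

text \<open>Pools of the partition: one pool per atomic player (atomic player + non-atomic mass),
  and purely non-atomic pools indexed by 'p.\<close>

datatype ('a, 'p) pool = APool 'a | NPool 'p

definition pools_of :: "'a set \<Rightarrow> 'p set \<Rightarrow> ('a, 'p) pool set" where
  "pools_of I P = APool ` I \<union> NPool ` P"

text \<open>Payment received by an identity of atomic player i with stake sigma joining pool x of the
  partition (i's own pool being taken without her).\<close>

definition identity_pay ::
  "real \<Rightarrow> real \<Rightarrow> ('a \<Rightarrow> real) \<Rightarrow> ('a \<Rightarrow> real) \<Rightarrow> 'a \<Rightarrow> ('a, 'p) pool \<Rightarrow> real \<Rightarrow> real" where
  "identity_pay h l a k i x \<sigma> =
     (case x of
        APool j \<Rightarrow> (if j = i then shapley_pay h (k i) [\<sigma>] 0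
                    else shapley_pay h (k j) [\<sigma>, a j] 0)
      | NPool p \<Rightarrow> shapley_pay h l [\<sigma>] 0)"

definition sybil_strategy ::
  "'a set \<Rightarrow> 'p set \<Rightarrow> ('a \<Rightarrow> real) \<Rightarrow> 'a \<Rightarrow> ('a, 'p) pool set \<Rightarrow> (('a, 'p) pool \<Rightarrow> real) \<Rightarrow> bool" where
  "sybil_strategy I P a i J s \<longleftrightarrow>
     J \<subseteq> pools_of I P \<and> (\<forall>x\<in>J. 0 \<le> s x) \<and> (\<Sum>x\<in>J. s x) = a i"

definition sybil_payoff ::
  "real \<Rightarrow> real \<Rightarrow> ('a \<Rightarrow> real) \<Rightarrow> ('a \<Rightarrow> real) \<Rightarrow> 'a \<Rightarrow> ('a, 'p) pool set \<Rightarrow> (('a, 'p) pool \<Rightarrow> real) \<Rightarrow> real" where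
  "sybil_payoff h l a k i J s = (\<Sum>x\<in>J. identity_pay h l a k i x (s x))"

end

theory Submission
  imports Defs
begin

text \<open>
  Let V = (k i + a i - h) / k i be the payoff of player i in her own pool. It suffices that every
  identity of stake \<sigma> earns at most \<sigma> V / a i; summing over the identities bounds the Sybil payoff
  by V.

  As the only atomic member of a pool with non-atomic mass m, an identity is pivotal iff its
  arrival point lies in [h - \<sigma>, h), so it earns at most \<sigma> / m, and exactly max 0 (m - h + \<sigma>) / m
  when m \<le> h. The latter is convex in \<sigma> and vanishes at 0, which settles her own former pool;
  \<sigma> / l \<le> (\<sigma> / a i) (a i / l) settles the purely non-atomic pools.

  In the pool of another atomic player j, integrating over the arrival point of the identity
  bounds its payment by Q \<sigma> = (d^2 - (max 0 (d - \<sigma>))^2 + (max 0 (\<sigma> - c))^2) / (2 (k j)^2) with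
  d = h - a j and c = h - k j. The balance condition d / (k j)^2 = 1 / l turns this into
  Q \<sigma> = \<sigma> / l + R \<sigma> / (2 (k j)^2) with R x = (max 0 (x - c))^2 + (max 0 (x - d))^2 - x^2,
  and R \<sigma> / \<sigma> is at most max 0 (R (a i)) / a i on (0, a i]. Hence
  Q \<sigma> / \<sigma> \<le> max (a i / l) (Q (a i)) / a i, which the hypotheses bound by V / a i.
\<close>

abbreviation uniform_Icc :: "real \<Rightarrow> real measure" where
  "uniform_Icc k \<equiv> uniform_measure lborel {0..k}"

lemma prob_space_uniform_Icc: "0 < k \<Longrightarrow> prob_space (uniform_Icc k)"
  by (rule prob_space_uniform_measure) auto

lemma measure_uniform_Icc:
  assumes "0 < k" and "S \<in> sets borel"
  shows "measure (uniform_Icc k) S = measure lborel ({0..k} \<inter> S) / k"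
  using assms by (subst measure_uniform_measure) auto

lemma product_sigma_finite_uniform_Icc: "0 < k \<Longrightarrow> product_sigma_finite (\<lambda>_::nat. uniform_Icc k)"
  by (intro product_sigma_finite.intro prob_space_imp_sigma_finite prob_space_uniform_Icc)

lemma emeasure_arrival_space_1:
  assumes "0 < k" and [measurable]: "Measurable.pred borel C"
  shows "emeasure (arrival_space k 1) {L \<in> space (arrival_space k 1). C (L 0)}
    = emeasure (uniform_Icc k) {x. C x}"
proof -
  interpret product_sigma_finite "\<lambda>_::nat. uniform_Icc k"
    using assms(1) by (rule product_sigma_finite_uniform_Icc)
  have event_measurable: "{L \<in> space (arrival_space k 1). C (L 0)} \<in> sets (arrival_space k 1)"
    unfolding arrival_space_def by measurable
  have "{..<1::nat} = {0}" by auto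
  have "emeasure (arrival_space k 1) {L \<in> space (arrival_space k 1). C (L 0)}
      = (\<integral>\<^sup>+L. indicator {x. C x} (L 0) \<partial>arrival_space k 1)"
    unfolding nn_integral_indicator[OF event_measurable, symmetric]
    by (rule nn_integral_cong) (auto split: split_indicator)
  also have "\<dots> = (\<integral>\<^sup>+x. indicator {x. C x} x \<partial>uniform_Icc k)"
    unfolding arrival_space_def \<open>{..<1} = {0}\<close> by (rule product_nn_integral_singleton) measurable
  also have "\<dots> = emeasure (uniform_Icc k) {x. C x}"
    by (rule nn_integral_indicator) measurable
  finally show ?thesis .
qed

lemma emeasure_arrival_space_2:
  assumes "0 < k" and [measurable]: "Measurable.pred (borel \<Otimes>\<^sub>M borel) (\<lambda>(x, y). C x y)"
  shows "emeasure (arrival_space k 2) {L \<in> space (arrival_space k 2). C (L 0) (L 1)}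
    = (\<integral>\<^sup>+x. emeasure (uniform_Icc k) {y. C x y} \<partial>uniform_Icc k)"
proof -
  interpret product_sigma_finite "\<lambda>_::nat. uniform_Icc k"
    using assms(1) by (rule product_sigma_finite_uniform_Icc)
  define g :: "real \<Rightarrow> real \<Rightarrow> ennreal" where "g x = indicator {y. C x y}" for x
  have [measurable]: "(\<lambda>(x, y). g x y) \<in> borel_measurable (borel \<Otimes>\<^sub>M borel)"
    unfolding g_def by measurable
  have event_measurable: "{L \<in> space (arrival_space k 2). C (L 0) (L 1)} \<in> sets (arrival_space k 2)"
    unfolding arrival_space_def by measurable
  have "{..<2::nat} = insert 1 {0}" by auto
  have "emeasure (arrival_space k 2) {L \<in> space (arrival_space k 2). C (L 0) (L 1)}
      = (\<integral>\<^sup>+L. g (L 0) (L 1) \<partial>arrival_space k 2)"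
    unfolding nn_integral_indicator[OF event_measurable, symmetric] g_def
    by (rule nn_integral_cong) (auto split: split_indicator)
  also have "\<dots> = (\<integral>\<^sup>+L. (\<integral>\<^sup>+y. g (L 0) y \<partial>uniform_Icc k) \<partial>Pi\<^sub>M {0::nat} (\<lambda>_. uniform_Icc k))"
    unfolding arrival_space_def \<open>{..<2} = insert 1 {0}\<close>
    using product_nn_integral_insert[of "{0}" 1 "\<lambda>L. g (L 0) (L 1)"] by simp
  also have "\<dots> = (\<integral>\<^sup>+x. \<integral>\<^sup>+y. g x y \<partial>uniform_Icc k \<partial>uniform_Icc k)"
    by (rule product_nn_integral_singleton) measurable
  also have "\<dots> = (\<integral>\<^sup>+x. emeasure (uniform_Icc k) {y. C x y} \<partial>uniform_Icc k)"
    unfolding g_def by (intro nn_integral_cong nn_integral_indicator) measurable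
  finally show ?thesis .
qed

lemma prob_space_arrival_space: "0 < k \<Longrightarrow> prob_space (arrival_space k t)"
  unfolding arrival_space_def by (intro prob_space_PiM prob_space_uniform_Icc)

lemma shapley_pay_single_atom:
  assumes "0 < k"
  shows "shapley_pay h k [\<sigma>] 0 = measure lborel ({0..k} \<inter> {h - \<sigma>..<h}) / k"
proof -
  have no_predecessors: "{j. j < length [\<sigma>] \<and> j \<noteq> 0 \<and> L j < L 0} = {}" for L :: "nat \<Rightarrow> real"
    by auto
  have "shapley_pay h k [\<sigma>] 0
      = measure (arrival_space k 1) {L \<in> space (arrival_space k 1). L 0 < h \<and> h \<le> L 0 + \<sigma>}"
    unfolding shapley_pay_def Let_def no_predecessors by simp
  also have "\<dots> = measure (uniform_Icc k) {x. x < h \<and> h \<le> x + \<sigma>}"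
    using emeasure_arrival_space_1[OF assms, of "\<lambda>x. x < h \<and> h \<le> x + \<sigma>"] by (simp add: measure_def)
  also have "{x. x < h \<and> h \<le> x + \<sigma>} = {h - \<sigma>..<h}"
    by auto
  finally show ?thesis
    using assms by (simp add: measure_uniform_Icc)
qed

lemma shapley_pay_single_atom_le:
  assumes "0 < k" and "0 \<le> \<sigma>"
  shows "shapley_pay h k [\<sigma>] 0 \<le> \<sigma> / k"
proof -
  have "measure lborel ({0..k} \<inter> {h - \<sigma>..<h}) \<le> measure lborel {h - \<sigma>..h}"
    by (rule measure_mono_fmeasurable) (auto simp: fmeasurable_compact)
  then show ?thesis
    using assms by (simp add: shapley_pay_single_atom divide_right_mono)
qed

lemma shapley_pay_single_atom_eq:
  assumes "0 < k" and "k \<le> h" and "0 \<le> \<sigma>" and "\<sigma> \<le> h"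
  shows "shapley_pay h k [\<sigma>] 0 = max 0 (k - h + \<sigma>) / k"
proof -
  have "measure lborel ({0..k} \<inter> {h - \<sigma>..<h}) = max 0 (k - h + \<sigma>)"
  proof (cases "k = h")
    case True
    then have "{0..k} \<inter> {h - \<sigma>..<h} = {h - \<sigma>..<k}"
      using assms by auto
    then show ?thesis
      using True assms by simp
  next
    case False
    then have "{0..k} \<inter> {h - \<sigma>..<h} = {h - \<sigma>..k}"
      using assms by auto
    then show ?thesis
      by simp
  qed
  then show ?thesis
    using assms by (simp add: shapley_pay_single_atom)
qed

lemma nn_integral_ramp_up:
  assumes "0 \<le> u" and "u \<le> v" and "0 < k"
  shows "(\<integral>\<^sup>+x. ennreal (x / k) * indicator {u..v} x \<partial>lborel) = ennreal ((v\<^sup>2 - u\<^sup>2) / (2 * k))"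
proof -
  have "(\<integral>\<^sup>+x. ennreal (x / k) * indicator {u..v} x \<partial>lborel) = ennreal (v\<^sup>2 / (2 * k) - u\<^sup>2 / (2 * k))"
    using assms
    by (intro nn_integral_FTC_Icc[where F = "\<lambda>x. x\<^sup>2 / (2 * k)"])
       (auto intro!: derivative_eq_intros simp: field_simps)
  then show ?thesis
    by (simp add: diff_divide_distrib)
qed

lemma nn_integral_ramp_down:
  assumes "0 < k"
  shows "(\<integral>\<^sup>+x. ennreal ((k - x) / k) * indicator {u..k} x \<partial>lborel)
    = ennreal ((max 0 (k - u))\<^sup>2 / (2 * k))"
proof (cases "u \<le> k")
  case True
  have "(\<integral>\<^sup>+x. ennreal ((k - x) / k) * indicator {u..k} x \<partial>lborel)
      = ennreal (- ((k - k)\<^sup>2 / (2 * k)) - - ((k - u)\<^sup>2 / (2 * k)))"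
    using assms True
    by (intro nn_integral_FTC_Icc[where F = "\<lambda>x. - ((k - x)\<^sup>2 / (2 * k))"])
       (auto intro!: derivative_eq_intros simp: field_simps)
  then show ?thesis
    using True by simp
next
  case False
  then show ?thesis
    by simp
qed

lemma shapley_pay_two_atoms:
  assumes "0 < k"
  shows "ennreal (shapley_pay h k [\<sigma>, b] 0) = (\<integral>\<^sup>+x. emeasure (uniform_Icc k)
    {y. (if y < x then b else 0) + x < h \<and> h \<le> (if y < x then b else 0) + x + \<sigma>} \<partial>uniform_Icc k)"
proof -
  interpret prob_space "arrival_space k 2"
    using assms by (rule prob_space_arrival_space)
  have predecessors: "{j. j < length [\<sigma>, b] \<and> j \<noteq> 0 \<and> L j < L 0} = (if L 1 < L 0 then {1} else {})"
    for L :: "nat \<Rightarrow> real"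
    by (auto simp: less_Suc_eq)
  have "shapley_pay h k [\<sigma>, b] 0 = measure (arrival_space k 2) {L \<in> space (arrival_space k 2).
      (if L 1 < L 0 then b else 0) + L 0 < h \<and> h \<le> (if L 1 < L 0 then b else 0) + L 0 + \<sigma>}"
    unfolding shapley_pay_def Let_def predecessors by (simp add: numeral_2_eq_2)
  then show ?thesis
    using emeasure_arrival_space_2[OF assms,
        of "\<lambda>x y. (if y < x then b else 0) + x < h \<and> h \<le> (if y < x then b else 0) + x + \<sigma>"]
    by (simp add: emeasure_eq_measure)
qed

lemma measure_pivotal_section_le:
  assumes "0 < k"
  shows "measure (uniform_Icc k)
      {y. (if y < x then b else 0) + x < h \<and> h \<le> (if y < x then b else 0) + x + \<sigma>}
    \<le> indicator {max 0 (h - b - \<sigma>)..h - b} x * x / k + indicator {h - \<sigma>..k} x * (k - x) / k"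
proof -
  define S where "S = {y. (if y < x then b else 0) + x < h \<and> h \<le> (if y < x then b else 0) + x + \<sigma>}"
  define T1 where "T1 = (if x \<in> {max 0 (h - b - \<sigma>)..h - b} then {0..x} else {})"
  define T2 where "T2 = (if x \<in> {h - \<sigma>..k} then {x..k} else {})"
  have [measurable]: "S \<in> sets borel"
    unfolding S_def by measurable
  have "{0..k} \<inter> S \<subseteq> T1 \<union> T2"
    unfolding S_def T1_def T2_def by (auto split: if_splits)
  then have "measure lborel ({0..k} \<inter> S) \<le> measure lborel (T1 \<union> T2)"
    by (rule measure_mono_fmeasurable) (auto simp: T1_def T2_def fmeasurable_compact)
  also have "\<dots> \<le> measure lborel T1 + measure lborel T2"
    by (rule measure_Un_le) (auto simp: T1_def T2_def)
  also have "\<dots> = indicator {max 0 (h - b - \<sigma>)..h - b} x * x + indicator {h - \<sigma>..k} x * (k - x)"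
    unfolding T1_def T2_def by (auto split: split_indicator)
  finally have "measure lborel ({0..k} \<inter> S) / k
      \<le> (indicator {max 0 (h - b - \<sigma>)..h - b} x * x + indicator {h - \<sigma>..k} x * (k - x)) / k"
    using assms by (simp add: divide_right_mono)
  then show ?thesis
    using assms by (simp add: measure_uniform_Icc S_def[symmetric] add_divide_distrib)
qed

lemma nn_integral_two_ramps:
  assumes "0 < k" and "0 \<le> \<alpha>" and "\<alpha> \<le> d"
  shows "(\<integral>\<^sup>+x. ennreal (indicator {\<alpha>..d} x * x / k + indicator {u..k} x * (k - x) / k) \<partial>lborel)
    = ennreal ((d\<^sup>2 - \<alpha>\<^sup>2) / (2 * k) + (max 0 (k - u))\<^sup>2 / (2 * k))"
proof -
  have "ennreal (indicator {\<alpha>..d} x * x / k + indicator {u..k} x * (k - x) / k)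
      = ennreal (x / k) * indicator {\<alpha>..d} x + ennreal ((k - x) / k) * indicator {u..k} x" for x
  proof -
    have "x \<in> {\<alpha>..d} \<Longrightarrow> 0 \<le> x / k" "x \<in> {u..k} \<Longrightarrow> 0 \<le> (k - x) / k"
      using assms by auto
    then show ?thesis
      by (auto split: split_indicator)
  qed
  moreover have "\<alpha>\<^sup>2 \<le> d\<^sup>2"
    using assms(2,3) by (simp add: power_mono)
  ultimately show ?thesis
    using assms by (simp add: nn_integral_add nn_integral_ramp_up nn_integral_ramp_down)
qed

lemma shapley_pay_two_atoms_le:
  assumes "0 < k" and "0 \<le> h - b" and "h - b \<le> k" and "0 \<le> \<sigma>"
  shows "shapley_pay h k [\<sigma>, b] 0
    \<le> ((h - b)\<^sup>2 - (max 0 (h - b - \<sigma>))\<^sup>2 + (max 0 (\<sigma> - (h - k)))\<^sup>2) / (2 * k\<^sup>2)"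
proof -
  interpret uniform: prob_space "uniform_Icc k"
    using assms(1) by (rule prob_space_uniform_Icc)
  define \<alpha> where "\<alpha> = max 0 (h - b - \<sigma>)"
  define \<psi> where "\<psi> x = indicator {\<alpha>..h - b} x * x / k + indicator {h - \<sigma>..k} x * (k - x) / k" for x
  define T where "T = ((h - b)\<^sup>2 - \<alpha>\<^sup>2) / (2 * k) + (max 0 (k - (h - \<sigma>)))\<^sup>2 / (2 * k)"
  have \<alpha>: "0 \<le> \<alpha>" "\<alpha> \<le> h - b"
    using assms by (auto simp: \<alpha>_def)
  then have "0 \<le> T"
    using assms(1) by (auto simp: T_def power_mono)
  have "ennreal (shapley_pay h k [\<sigma>, b] 0) \<le> (\<integral>\<^sup>+x. ennreal (\<psi> x) \<partial>uniform_Icc k)"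
    unfolding shapley_pay_two_atoms[OF assms(1)] uniform.emeasure_eq_measure \<psi>_def \<alpha>_def
    by (intro nn_integral_mono ennreal_leI measure_pivotal_section_le assms(1))
  also have "\<dots> = (\<integral>\<^sup>+x. ennreal (\<psi> x) * indicator {0..k} x \<partial>lborel) / ennreal k"
    using assms(1) by (subst nn_integral_uniform_measure) (auto simp: \<psi>_def)
  also have "\<dots> \<le> (\<integral>\<^sup>+x. ennreal (\<psi> x) \<partial>lborel) / ennreal k"
    by (intro divide_right_mono_ennreal nn_integral_mono) (auto split: split_indicator)
  also have "\<dots> = ennreal (T / k)"
    unfolding \<psi>_def T_def using assms(1) \<alpha> \<open>0 \<le> T\<close>[unfolded T_def]
    by (simp add: nn_integral_two_ramps divide_ennreal del: ennreal_plus)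
  finally have "shapley_pay h k [\<sigma>, b] 0 \<le> T / k"
    using \<open>0 \<le> T\<close> assms(1) by simp
  also have "T / k = ((h - b)\<^sup>2 - \<alpha>\<^sup>2 + (max 0 (\<sigma> - (h - k)))\<^sup>2) / (2 * k\<^sup>2)"
    using assms(1) by (simp add: T_def field_simps power2_eq_square)
  finally show ?thesis
    unfolding \<alpha>_def .
qed

lemma single_atom_share_le:
  fixes k h a \<sigma> :: real
  assumes "0 < k" and "k \<le> h" and "h \<le> a + k" and "0 \<le> \<sigma>" and "\<sigma> \<le> a"
  shows "max 0 (k - h + \<sigma>) / k \<le> \<sigma> * ((k + a - h) / k) / a"
proof (cases "k - h + \<sigma> \<le> 0")
  case True
  have "0 \<le> \<sigma> * ((k + a - h) / k) / a"
    using assms by (simp add: zero_le_divide_iff)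
  then show ?thesis
    using True by simp
next
  case False
  then have "0 < a"
    using assms by linarith
  have "(k - h) * (a - \<sigma>) \<le> 0"
    using assms by (intro mult_nonpos_nonneg) auto
  then have "(k - h + \<sigma>) * a \<le> \<sigma> * (k + a - h)"
    by (simp add: algebra_simps)
  then have "k - h + \<sigma> \<le> \<sigma> * (k + a - h) / a"
    using \<open>0 < a\<close> by (simp add: pos_le_divide_eq)
  then have "(k - h + \<sigma>) / k \<le> \<sigma> * (k + a - h) / a / k"
    using assms(1) by (intro divide_right_mono) auto
  then show ?thesis
    using False by (simp add: mult.commute)
qed

definition quadratic_excess :: "real \<Rightarrow> real \<Rightarrow> real \<Rightarrow> real" where
  "quadratic_excess c d x = (max 0 (x - c))\<^sup>2 + (max 0 (x - d))\<^sup>2 - x\<^sup>2"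

lemma quadratic_excess_commute: "quadratic_excess c d x = quadratic_excess d c x"
  by (simp add: quadratic_excess_def)

lemma quadratic_excess_pos_imp_less:
  assumes "0 \<le> d" and "0 \<le> x" and "0 < quadratic_excess c d x"
  shows "c < x"
proof (rule ccontr)
  assume "\<not> c < x"
  then have "quadratic_excess c d x = (max 0 (x - d))\<^sup>2 - x\<^sup>2"
    by (simp add: quadratic_excess_def)
  also have "\<dots> \<le> 0"
    using assms(1,2) by (simp add: power_mono)
  finally show False
    using assms(3) by simp
qed

lemma quadratic_excess_le_scaled:
  assumes "0 \<le> c" and "0 \<le> d" and "0 \<le> \<sigma>" and "\<sigma> \<le> a"
  shows "a * quadratic_excess c d \<sigma> \<le> \<sigma> * max 0 (quadratic_excess c d a)"
proof (cases "quadratic_excess c d \<sigma> \<le> 0")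
  case True
  have "a * quadratic_excess c d \<sigma> \<le> 0"
    using True assms by (intro mult_nonneg_nonpos) auto
  also have "0 \<le> \<sigma> * max 0 (quadratic_excess c d a)"
    using assms by simp
  finally show ?thesis .
next
  case False
  then have "c < \<sigma>" and "d < \<sigma>"
    using assms quadratic_excess_pos_imp_less quadratic_excess_commute by (metis not_le)+
  define K where "K = c\<^sup>2 + d\<^sup>2"
  have expand: "quadratic_excess c d x = x\<^sup>2 - 2 * (c + d) * x + K" if "\<sigma> \<le> x" for x
    using that \<open>c < \<sigma>\<close> \<open>d < \<sigma>\<close> by (simp add: quadratic_excess_def K_def power2_eq_square algebra_simps)
  have "K \<le> (c + d) * \<sigma>"
    using \<open>c < \<sigma>\<close> \<open>d < \<sigma>\<close> assms(1,2) unfolding K_def power2_eq_square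
    by (simp add: distrib_right add_mono mult_left_mono)
  then have "K < \<sigma>\<^sup>2"
    using False expand[of \<sigma>] by (simp add: algebra_simps)
  moreover have "\<sigma>\<^sup>2 \<le> a * \<sigma>"
    using assms(3,4) by (simp add: power2_eq_square mult_right_mono)
  ultimately have "K \<le> a * \<sigma>"
    by simp
  then have "0 \<le> (a - \<sigma>) * (a * \<sigma> - K)"
    using assms by simp
  then have "a * quadratic_excess c d \<sigma> \<le> \<sigma> * quadratic_excess c d a"
    unfolding expand[OF order_refl] expand[OF assms(4)] by (simp add: algebra_simps power2_eq_square)
  also have "\<dots> \<le> \<sigma> * max 0 (quadratic_excess c d a)"
    using assms(3) by (intro mult_left_mono) auto
  finally show ?thesis .
qed

lemma two_atom_share_le:
  fixes c d k l a \<sigma> V :: real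
  assumes "0 < k" and "0 \<le> c" and "0 \<le> d" and "0 \<le> \<sigma>" and "\<sigma> \<le> a" and "0 < a"
    and "d / k\<^sup>2 = 1 / l"
    and "a / l \<le> V"
    and "(d\<^sup>2 - (max 0 (d - a))\<^sup>2 + (max 0 (a - c))\<^sup>2) / (2 * k\<^sup>2) \<le> V"
  shows "(d\<^sup>2 - (max 0 (d - \<sigma>))\<^sup>2 + (max 0 (\<sigma> - c))\<^sup>2) / (2 * k\<^sup>2) \<le> \<sigma> * V / a"
proof -
  have split: "(d\<^sup>2 - (max 0 (d - x))\<^sup>2 + (max 0 (x - c))\<^sup>2) / (2 * k\<^sup>2)
      = x / l + quadratic_excess c d x / (2 * k\<^sup>2)" for x
  proof -
    have "d\<^sup>2 - (max 0 (d - x))\<^sup>2 + (max 0 (x - c))\<^sup>2 = 2 * d * x + quadratic_excess c d x"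
      unfolding quadratic_excess_def by (cases "x \<le> d") (auto simp: power2_eq_square algebra_simps max_def)
    moreover have "2 * d * x / (2 * k\<^sup>2) = x * (d / k\<^sup>2)"
      by simp
    ultimately show ?thesis
      using assms(7) by (simp add: add_divide_distrib)
  qed
  have V_bound: "a / l + max 0 (quadratic_excess c d a) / (2 * k\<^sup>2) \<le> V"
    using assms(8,9) split[of a] by (cases "quadratic_excess c d a \<le> 0") auto
  have "a * quadratic_excess c d \<sigma> \<le> \<sigma> * max 0 (quadratic_excess c d a)"
    using assms(2-5) by (rule quadratic_excess_le_scaled)
  then have "quadratic_excess c d \<sigma> / (2 * k\<^sup>2) \<le> \<sigma> / a * (max 0 (quadratic_excess c d a) / (2 * k\<^sup>2))"
    using assms(1,6) by (simp add: field_simps)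
  then have "\<sigma> / l + quadratic_excess c d \<sigma> / (2 * k\<^sup>2)
      \<le> \<sigma> / a * (a / l + max 0 (quadratic_excess c d a) / (2 * k\<^sup>2))"
    using assms(6) by (simp add: distrib_left)
  also have "\<dots> \<le> \<sigma> / a * V"
    using V_bound assms(4,6) by (intro mult_left_mono) auto
  finally show ?thesis
    by (simp add: split)
qed

locale shapley_partition =
  fixes h l :: real and a k :: "'a \<Rightarrow> real" and I :: "'a set" and P :: "'p set"
  assumes finite_atomic: "finite I" and finite_non_atomic: "finite P"
    and stake_bounds: "i \<in> I \<Longrightarrow> 0 < a i \<and> a i < h"
    and mass_bounds: "i \<in> I \<Longrightarrow> 0 < k i \<and> k i \<le> h \<and> h \<le> a i + k i"
    and threshold_le_mass: "h \<le> l"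
    and mass_balance: "i \<in> I \<Longrightarrow> (h - a i) / (k i)\<^sup>2 = 1 / l"
    and own_pay_ge_non_atomic: "i \<in> I \<Longrightarrow> a i / l \<le> (k i + a i - h) / k i"
    and own_pay_ge_atomic: "i \<in> I \<Longrightarrow> j \<in> I \<Longrightarrow> i \<noteq> j \<Longrightarrow>
      ((h - a j)\<^sup>2 - (max 0 (h - a i - a j))\<^sup>2 + (max 0 (a i - h + k j))\<^sup>2) / (2 * (k j)\<^sup>2)
        \<le> (k i + a i - h) / k i"
begin

lemma own_pay_eq:
  assumes "i \<in> I"
  shows "shapley_pay h (k i) [a i] 0 = (k i + a i - h) / k i"
  using assms stake_bounds[of i] mass_bounds[of i]
  by (simp add: shapley_pay_single_atom_eq algebra_simps)

lemma own_pool_pay_le_share: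
  assumes "i \<in> I" and "0 \<le> \<sigma>" and "\<sigma> \<le> a i"
  shows "shapley_pay h (k i) [\<sigma>] 0 \<le> \<sigma> * ((k i + a i - h) / k i) / a i"
proof -
  have "0 < k i" "k i \<le> h" "h \<le> a i + k i" "a i < h"
    using stake_bounds[OF assms(1)] mass_bounds[OF assms(1)] by auto
  then have "shapley_pay h (k i) [\<sigma>] 0 = max 0 (k i - h + \<sigma>) / k i"
    using assms(2,3) by (simp add: shapley_pay_single_atom_eq)
  also have "\<dots> \<le> \<sigma> * ((k i + a i - h) / k i) / a i"
    using \<open>0 < k i\<close> \<open>k i \<le> h\<close> \<open>h \<le> a i + k i\<close> assms(2,3) by (rule single_atom_share_le)
  finally show ?thesis .
qed

lemma non_atomic_pool_pay_le_share:
  assumes "i \<in> I" and "0 \<le> \<sigma>"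
  shows "shapley_pay h l [\<sigma>] 0 \<le> \<sigma> * ((k i + a i - h) / k i) / a i"
proof -
  have "0 < a i" "a i < h"
    using stake_bounds[OF assms(1)] by auto
  then have "0 < l"
    using threshold_le_mass by linarith
  then have "shapley_pay h l [\<sigma>] 0 \<le> \<sigma> / l"
    using assms(2) by (rule shapley_pay_single_atom_le)
  also have "\<dots> = \<sigma> / a i * (a i / l)"
    using \<open>0 < a i\<close> by simp
  also have "\<dots> \<le> \<sigma> / a i * ((k i + a i - h) / k i)"
    using own_pay_ge_non_atomic[OF assms(1)] assms(2) \<open>0 < a i\<close> by (intro mult_left_mono) auto
  finally show ?thesis
    by (simp add: mult.commute)
qed

lemma atomic_pool_pay_le_share:
  assumes "i \<in> I" and "j \<in> I" and "i \<noteq> j" and "0 \<le> \<sigma>" and "\<sigma> \<le> a i"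
  shows "shapley_pay h (k j) [\<sigma>, a j] 0 \<le> \<sigma> * ((k i + a i - h) / k i) / a i"
proof -
  note a_i = stake_bounds[OF assms(1)] and a_j = stake_bounds[OF assms(2)]
    and k_j = mass_bounds[OF assms(2)]
  have "shapley_pay h (k j) [\<sigma>, a j] 0
      \<le> ((h - a j)\<^sup>2 - (max 0 (h - a j - \<sigma>))\<^sup>2 + (max 0 (\<sigma> - (h - k j)))\<^sup>2) / (2 * (k j)\<^sup>2)"
    using a_j k_j assms(4) by (intro shapley_pay_two_atoms_le) auto
  also have "\<dots> \<le> \<sigma> * ((k i + a i - h) / k i) / a i"
  proof (rule two_atom_share_le)
    show "(h - a j) / (k j)\<^sup>2 = 1 / l"
      using assms(2) by (rule mass_balance)
    show "a i / l \<le> (k i + a i - h) / k i"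
      using assms(1) by (rule own_pay_ge_non_atomic)
    show "((h - a j)\<^sup>2 - (max 0 (h - a j - a i))\<^sup>2 + (max 0 (a i - (h - k j)))\<^sup>2) / (2 * (k j)\<^sup>2)
        \<le> (k i + a i - h) / k i"
      using own_pay_ge_atomic[OF assms(1-3)] by (simp add: algebra_simps)
  qed (use a_i a_j k_j assms(4,5) in auto)
  finally show ?thesis .
qed

lemma identity_pay_le_share:
  assumes "i \<in> I" and "x \<in> pools_of I P" and "0 \<le> \<sigma>" and "\<sigma> \<le> a i"
  shows "identity_pay h l a k i x \<sigma> \<le> \<sigma> * shapley_pay h (k i) [a i] 0 / a i"
proof -
  have "identity_pay h l a k i x \<sigma> \<le> \<sigma> * ((k i + a i - h) / k i) / a i"
  proof (cases x)
    case (APool j)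
    then have "j \<in> I"
      using assms(2) by (auto simp: pools_of_def)
    then show ?thesis
      using APool assms own_pool_pay_le_share atomic_pool_pay_le_share
      by (cases "j = i") (auto simp: identity_pay_def)
  next
    case (NPool p)
    then show ?thesis
      using assms non_atomic_pool_pay_le_share by (simp add: identity_pay_def)
  qed
  then show ?thesis
    using own_pay_eq[OF assms(1)] by simp
qed

lemma sybil_payoff_le_own_pay:
  assumes "i \<in> I" and "sybil_strategy I P a i J s"
  shows "sybil_payoff h l a k i J s \<le> shapley_pay h (k i) [a i] 0"
proof -
  have J: "J \<subseteq> pools_of I P" and s_nonneg: "\<And>x. x \<in> J \<Longrightarrow> 0 \<le> s x" and s_sum: "(\<Sum>x\<in>J. s x) = a i"
    using assms(2) by (auto simp: sybil_strategy_def)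
  have "finite J"
    using J finite_atomic finite_non_atomic by (auto simp: pools_of_def intro: finite_subset)
  have s_le: "s x \<le> a i" if "x \<in> J" for x
    using member_le_sum[of x J s] that s_nonneg \<open>finite J\<close> s_sum by auto
  have "sybil_payoff h l a k i J s \<le> (\<Sum>x\<in>J. s x * shapley_pay h (k i) [a i] 0 / a i)"
    unfolding sybil_payoff_def
    using J s_nonneg s_le by (intro sum_mono identity_pay_le_share[OF assms(1)]) auto
  also have "\<dots> = shapley_pay h (k i) [a i] 0"
    using s_sum stake_bounds[OF assms(1)] by (simp flip: sum_divide_distrib sum_distrib_right)
  finally show ?thesis .
qed

end

theorem theorem5p1:
  fixes h l :: real and a k :: "'a \<Rightarrow> real" and I :: "'a set" and P :: "'p set"
  assumes "0 < h" and "finite I" and "finite P" and "P \<noteq> {}"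
    and "\<forall>i\<in>I. 0 < a i \<and> a i < h"
    and "\<forall>i\<in>I. 0 < k i \<and> k i \<le> h \<and> h \<le> a i + k i"
    and "h \<le> l"
    and "\<forall>i\<in>I. (h - a i) / (k i)^2 = 1 / l"
    and "\<forall>i\<in>I. (k i + a i - h) / k i \<ge> a i / l"
    and "\<forall>i\<in>I. \<forall>j\<in>I. i \<noteq> j \<longrightarrow>
           (k i + a i - h) / k i \<ge>
           ((h - a j)^2 - (max 0 (h - a i - a j))^2 + (max 0 (a i - h + k j))^2) / (2 * (k j)^2)"
  shows "\<forall>i\<in>I. \<forall>J s. sybil_strategy I P a i J s \<longrightarrow>
           sybil_payoff h l a k i J s \<le> shapley_pay h (k i) [a i] 0"
proof -
  interpret shapley_partition h l a k I P
    using assms(2,3,5-10) by unfold_locales auto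
  show ?thesis
    using sybil_payoff_le_own_pay by blast
qed

end
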